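(* Let $f:\mathbb N\to(0,\infty)$ be a function and $\theta>0$. Consider the putative PPF defined for every $\mathbf n=(n_1,\dots,n_k)\in\mathbb N^*$ by $$p_j(\mathbf n)=\frac{f(n_j)}{\sum_{u=1}^k f(n_u)+\theta}\ (j=1,\dots,k),\qquad p_{k+1}(\mathbf n)=\frac{\theta}{\sum_{u=1}^k f(n_u)+\theta}.$$ Suppose this putative PPF satisfies $$p_i(\mathbf n)\,p_j(\mathbf n^{i+})=p_j(\mathbf n)\,p_i(\mathbf n^{j+})\quad\text{for all }\mathbf n\in\mathbb N^*,\ i,j\in\{1,\dots,k(\mathbf n)+1\}.$$ Then there exists $a>0$ such that $f(m)=am$ for all $m\in\mathbb N$.
   Context: Notation: $\mathbb N=\{1,2,\dots\}$ and $\mathbb N^*=\bigcup_{k\ge1}\mathbb N^k$. For $\mathbf n=(n_1,\dots,n_k)$ write $k(\mathbf n)=k$. For $j\le k$, $\mathbf n^{j+}$ is $\mathbf n$ with its $j$th entry increased by $1$; $\mathbf n^{(k+1)+}=(n_1,\dots,n_k,1)$. A putative PPF is a sequence of functions $p_j$ on $\mathbb N^*$ with $p_j(\mathbf n)\ge0$ and $\sum_{j=1}^{k(\mathbf n)+1}p_j(\mathbf n)=1$. *)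

theory Defs
  imports Complex_Main
begin

text \<open>Elements of N* are nonempty lists of positive naturals (n_1,...,n_k), k = length.
Indices j range over 1..k+1 (1-based).\<close>

definition compositions :: "nat list set" where
  "compositions = {ns. ns \<noteq> [] \<and> (\<forall>x\<in>set ns. x \<ge> 1)}"

definition incr :: "nat list \<Rightarrow> nat \<Rightarrow> nat list" where
  "incr ns j = (if j = length ns + 1 then ns @ [1] else ns[j - 1 := ns ! (j - 1) + 1])"

definition ppf :: "(nat \<Rightarrow> real) \<Rightarrow> real \<Rightarrow> nat \<Rightarrow> nat list \<Rightarrow> real" where
  "ppf f \<theta> j ns =
     (if j = length ns + 1 then \<theta> / ((\<Sum>u<length ns. f (ns ! u)) + \<theta>)
      else f (ns ! (j - 1)) / ((\<Sum>u<length ns. f (ns ! u)) + \<theta>))"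

end

theory Submission
  imports Defs
begin

text \<open>Apply exchangeability to the one-block composition (m) with i = 1, j = 2: growing the
block and then opening a new one has probability f m \<theta> / ((f m + \<theta>)(f (m+1) + \<theta>)), while
opening a new block first has probability \<theta> f m / ((f m + \<theta>)(f m + f 1 + \<theta>)). Hence
f (m+1) = f m + f 1, and f is linear with slope f 1 > 0.\<close>

lemma linear_if_constant_increment:
  fixes g :: "nat \<Rightarrow> 'a::semiring_1"
  assumes "\<And>m. m \<ge> 1 \<Longrightarrow> g (Suc m) = g m + g 1" and "m \<ge> 1"
  shows "g m = of_nat m * g 1"
  using \<open>m \<ge> 1\<close>
proof (induction m rule: dec_induct)
  case base
  show ?case by simp
next
  case (step n)
  have "g (Suc n) = g n + g 1"
    using assms(1) step.hyps(1) by simp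
  with step.IH show ?case
    by (simp add: distrib_right add.commute del: One_nat_def)
qed

lemma increment_eq_first_if_exchangeable:
  fixes f :: "nat \<Rightarrow> real"
  assumes pos: "f m > 0" "f 1 > 0" "f (Suc m) > 0" "\<theta> > 0"
    and exch: "ppf f \<theta> 1 [m] * ppf f \<theta> 2 (incr [m] 1) = ppf f \<theta> 2 [m] * ppf f \<theta> 1 (incr [m] 2)"
  shows "f (Suc m) = f m + f 1"
proof -
  have "f m / (f m + \<theta>) * (\<theta> / (f (Suc m) + \<theta>)) = \<theta> / (f m + \<theta>) * (f m / (f m + f 1 + \<theta>))"
    using exch by (simp add: ppf_def incr_def lessThan_Suc numeral_2_eq_2 add.commute)
  then have "(f m + \<theta>) * f (Suc m) = (f m + \<theta>) * (f m + f 1)"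
    using pos by (simp add: field_simps)
  then show ?thesis
    using pos by simp
qed

theorem corollary1:
  fixes f :: "nat \<Rightarrow> real" and \<theta> :: real
  assumes fpos: "\<And>m. m \<ge> 1 \<Longrightarrow> f m > 0"
    and thpos: "\<theta> > 0"
    and exch: "\<And>ns i j. ns \<in> compositions \<Longrightarrow> i \<in> {1..length ns + 1} \<Longrightarrow> j \<in> {1..length ns + 1} \<Longrightarrow>
         ppf f \<theta> i ns * ppf f \<theta> j (incr ns i) = ppf f \<theta> j ns * ppf f \<theta> i (incr ns j)"
  shows "\<exists>a > 0. \<forall>m \<ge> 1. f m = a * real m"
proof (intro exI conjI allI impI)
  have increment: "f (Suc m) = f m + f 1" if "m \<ge> 1" for m
  proof (rule increment_eq_first_if_exchangeable)
    have "[m] \<in> compositions"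
      using that by (simp add: compositions_def)
    then show "ppf f \<theta> 1 [m] * ppf f \<theta> 2 (incr [m] 1) = ppf f \<theta> 2 [m] * ppf f \<theta> 1 (incr [m] 2)"
      using exch by simp
  qed (use fpos that thpos in auto)
  show "f 1 > 0"
    using fpos by simp
  fix m :: nat
  assume "m \<ge> 1"
  then show "f m = f 1 * real m"
    using linear_if_constant_increment[of f m] increment by (simp add: mult.commute)
qed

end
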